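(* Let $X_1,\dots,X_n,R_1,\dots,R_n$ be mutually independent random variables, all real-valued or all taking values in $\mathbb{Z}_p$ (addition mod $p$), such that $\mathrm{I}(X_i;X_i+R_i)=0$ for every $i$. Then for every $i$, $$\mathrm{I}\Big(X_i;\ X_1+R_1,\dots,X_n+R_n,\ \textstyle\sum_{j=1}^n R_j\Big)=\mathrm{I}\Big(X_i;\ \textstyle\sum_{j=1}^n X_j\Big).$$
   Context: $\mathrm{I}$ denotes mutual information. *)

theory Defs
  imports "HOL-Probability.Probability"
begin

text \<open>Mutual information with the standard convention that it is \<open>\<infinity>\<close> whenever the
  joint law is not absolutely continuous w.r.t. the product of the marginals, or the
  log-density is not integrable w.r.t. the joint law (i.e. the KL divergence is \<open>+\<infinity>\<close>).
  In the finite case it coincides with the library's \<open>mutual_information\<close>.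
  We use the natural logarithm (base e); the base is irrelevant for the statement.\<close>

definition MI :: "'a measure \<Rightarrow> 'b measure \<Rightarrow> 'c measure \<Rightarrow> ('a \<Rightarrow> 'b) \<Rightarrow> ('a \<Rightarrow> 'c) \<Rightarrow> ereal" where
  "MI M S T X Y =
    (let P = distr M S X \<Otimes>\<^sub>M distr M T Y;
         Q = distr M (S \<Otimes>\<^sub>M T) (\<lambda>x. (X x, Y x))
     in if absolutely_continuous P Q \<and> integrable Q (entropy_density (exp 1) P Q)
        then ereal (prob_space.mutual_information M (exp 1) S T X Y)
        else \<infinity>)"

end

theory Submission
  imports Defs
begin

text \<open>Mutual information is the KL divergence between the joint law and the product of the
  marginals; hence it does not change when one variable is replaced by a measurable bijective image,
  or when both laws are tensored with a common factor. The hypothesis \<open>I(X\<^sub>j; Y\<^sub>j) = 0\<close>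
  makes each input \<open>X\<^sub>j\<close> independent of its output \<open>Y\<^sub>j = X\<^sub>j + R\<^sub>j\<close>, and together
  with the mutual independence of all \<open>X\<^sub>j, R\<^sub>j\<close> the input vector is independent of the output
  vector \<open>Y\<close>. As \<open>\<Sum>R = \<Sum>Y - \<Sum>X\<close>, the observation \<open>(Y, \<Sum>R)\<close> is a bijective image of
  \<open>(\<Sum>X, Y)\<close>, and \<open>(X\<^sub>i, \<Sum>X)\<close> is independent of \<open>Y\<close>, so
  \<open>I(X\<^sub>i; Y, \<Sum>R) = I(X\<^sub>i; \<Sum>X, Y) = I(X\<^sub>i; \<Sum>X)\<close>.\<close>

definition ext_KL_divergence :: "'a measure \<Rightarrow> 'a measure \<Rightarrow> ereal" where
  "ext_KL_divergence P Q =
    (if absolutely_continuous P Q \<and> integrable Q (entropy_density (exp 1) P Q)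
     then ereal (KL_divergence (exp 1) P Q) else \<infinity>)"

lemma MI_eq_ext_KL_divergence:
  "prob_space M \<Longrightarrow> MI M S T X Y =
    ext_KL_divergence (distr M S X \<Otimes>\<^sub>M distr M T Y) (distr M (S \<Otimes>\<^sub>M T) (\<lambda>x. (X x, Y x)))"
  unfolding MI_def ext_KL_divergence_def Let_def prob_space.mutual_information_def by simp

lemma ext_KL_divergence_density:
  assumes P: "sigma_finite_measure P" and f[measurable]: "f \<in> borel_measurable P"
    and Q: "Q = density P f"
  shows "ext_KL_divergence P Q = (if integrable Q (\<lambda>x. ln (enn2real (f x)))
     then ereal (\<integral>x. ln (enn2real (f x)) \<partial>Q) else \<infinity>)"
proof -
  have "AE x in P. f x = RN_deriv P Q x"
    using sigma_finite_measure.RN_deriv_unique[OF P f Q[symmetric]] .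
  then have "AE x in Q. f x = RN_deriv P Q x"
    unfolding Q using f by (subst AE_density) (auto elim: AE_mp)
  then have ae: "AE x in Q. entropy_density (exp 1) P Q x = ln (enn2real (f x))"
    by eventually_elim (simp add: entropy_density_def log_ln[symmetric])
  have sets_Q: "sets Q = sets P" unfolding Q by simp
  have "entropy_density (exp 1) P Q \<in> borel_measurable Q"
    "(\<lambda>x. ln (enn2real (f x))) \<in> borel_measurable Q"
    by (simp_all add: measurable_cong_sets[OF sets_Q refl])
  note integrable_cong_AE[OF this ae] integral_cong_AE[OF this ae]
  moreover have "absolutely_continuous P Q"
    unfolding Q by (rule absolutely_continuousI_density) fact
  ultimately show ?thesis
    unfolding ext_KL_divergence_def KL_divergence_def by simp
qed

lemma absolutely_continuous_distr:
  assumes ac: "absolutely_continuous P Q" and sets_Q: "sets Q = sets P" and f: "f \<in> P \<rightarrow>\<^sub>M N"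
  shows "absolutely_continuous (distr P N f) (distr Q N f)"
proof -
  have fQ: "f \<in> Q \<rightarrow>\<^sub>M N" using f by (simp add: measurable_cong_sets[OF sets_Q refl])
  have "space Q = space P" using sets_Q by (rule sets_eq_imp_space_eq)
  then show ?thesis
    using ac unfolding absolutely_continuous_def
    by (auto simp: null_sets_def emeasure_distr f fQ subset_eq measurable_sets[OF f])
qed

lemma ext_KL_divergence_distr:
  assumes P: "prob_space P" and sets_Q: "sets Q = sets P"
    and [measurable]: "T \<in> P \<rightarrow>\<^sub>M N" "T' \<in> N \<rightarrow>\<^sub>M P"
    and inv: "\<And>x. x \<in> space P \<Longrightarrow> T' (T x) = x"
  shows "ext_KL_divergence (distr P N T) (distr Q N T) = ext_KL_divergence P Q"
proof (cases "absolutely_continuous P Q")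
  case True
  interpret P: prob_space P by fact
  have space_Q: "space Q = space P" using sets_Q by (rule sets_eq_imp_space_eq)
  have TQ[measurable]: "T \<in> Q \<rightarrow>\<^sub>M N" by (simp add: measurable_cong_sets[OF sets_Q refl])
  define g where "g = RN_deriv P Q"
  have g[measurable]: "g \<in> borel_measurable P" unfolding g_def by simp
  have Q: "Q = density P g" unfolding g_def using P.density_RN_deriv[OF True sets_Q] by simp
  have "distr Q N T = distr (density P (\<lambda>x. g (T' (T x)))) N T"
    unfolding Q by (intro arg_cong[where f="\<lambda>Q. distr Q N T"] density_cong) (auto simp: inv)
  also have "\<dots> = density (distr P N T) (\<lambda>y. g (T' y))"
    by (rule density_distr[symmetric]) measurable
  finally have TQ_density: "distr Q N T = density (distr P N T) (\<lambda>y. g (T' y))" .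
  have ln_g[measurable]: "(\<lambda>y. ln (enn2real (g (T' y)))) \<in> borel_measurable N" by measurable
  have "integrable (distr Q N T) (\<lambda>y. ln (enn2real (g (T' y)))) \<longleftrightarrow>
      integrable Q (\<lambda>x. ln (enn2real (g x)))"
    by (subst integrable_distr_eq[OF TQ ln_g])
       (rule Bochner_Integration.integrable_cong, auto simp: space_Q inv)
  moreover have "(\<integral>y. ln (enn2real (g (T' y))) \<partial>distr Q N T) = (\<integral>x. ln (enn2real (g x)) \<partial>Q)"
    by (subst integral_distr[OF TQ ln_g])
       (auto intro!: Bochner_Integration.integral_cong simp: space_Q inv)
  moreover have "sigma_finite_measure (distr P N T)"
    by (simp add: P.prob_space_distr prob_space_imp_sigma_finite)
  ultimately show ?thesis
    by (simp add: ext_KL_divergence_density[OF _ _ TQ_density]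
        ext_KL_divergence_density[OF P.sigma_finite_measure_axioms g Q])
next
  case False
  have T'T: "distr (distr R N T) P T' = R" if "sets R = sets P" for R
  proof -
    have "distr (distr R N T) P T' = distr R P (\<lambda>x. x)"
      using that sets_eq_imp_space_eq[OF that]
      by (subst distr_distr) (auto simp: measurable_cong_sets[OF that refl] inv intro!: distr_cong)
    then show ?thesis using that by (simp add: distr_id2)
  qed
  have "\<not> absolutely_continuous (distr P N T) (distr Q N T)"
    using absolutely_continuous_distr[of "distr P N T" "distr Q N T" T' P] False
    by (auto simp: T'T sets_Q)
  then show ?thesis using False unfolding ext_KL_divergence_def by simp
qed

lemma ext_KL_divergence_pair_measure:
  assumes P: "prob_space P" and D: "prob_space D" and sets_Q: "sets Q = sets P"
  shows "ext_KL_divergence (P \<Otimes>\<^sub>M D) (Q \<Otimes>\<^sub>M D) = ext_KL_divergence P Q"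
proof (cases "absolutely_continuous P Q")
  case True
  interpret P: prob_space P by fact
  interpret D: prob_space D by fact
  define g where "g = RN_deriv P Q"
  have g[measurable]: "g \<in> borel_measurable P" unfolding g_def by simp
  have Q_density: "Q = density P g" unfolding g_def using P.density_RN_deriv[OF True sets_Q] by simp
  have "Q \<Otimes>\<^sub>M D = density P g \<Otimes>\<^sub>M density D (\<lambda>_. 1)"
    using Q_density by (simp add: density_1)
  also have "\<dots> = density (P \<Otimes>\<^sub>M D) (\<lambda>(x, y). g x * 1)"
    by (rule pair_measure_density) (auto simp: density_1 D.sigma_finite_measure_axioms)
  also have "\<dots> = density (P \<Otimes>\<^sub>M D) (\<lambda>z. g (fst z))"
    by (rule density_cong) (auto simp: split_beta)
  finally have QD_density: "Q \<Otimes>\<^sub>M D = density (P \<Otimes>\<^sub>M D) (\<lambda>z. g (fst z))" .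
  have ln_g: "(\<lambda>x. ln (enn2real (g x))) \<in> borel_measurable Q"
    by (simp add: measurable_cong_sets[OF sets_Q refl])
  have fst: "fst \<in> Q \<Otimes>\<^sub>M D \<rightarrow>\<^sub>M Q" and marginal: "distr (Q \<Otimes>\<^sub>M D) Q fst = Q"
    by (simp_all add: D.distr_pair_fst)
  have "sigma_finite_measure (P \<Otimes>\<^sub>M D)"
    by (simp add: prob_space_pair[OF P D] prob_space_imp_sigma_finite)
  then show ?thesis
    using integrable_distr_eq[OF fst ln_g] integral_distr[OF fst ln_g]
    by (simp add: ext_KL_divergence_density[OF _ _ QD_density] marginal
        ext_KL_divergence_density[OF P.sigma_finite_measure_axioms g Q_density])
next
  case False
  interpret D: prob_space D by fact
  have "absolutely_continuous P Q" if ac: "absolutely_continuous (P \<Otimes>\<^sub>M D) (Q \<Otimes>\<^sub>M D)"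
    unfolding absolutely_continuous_def
  proof
    fix A assume A: "A \<in> null_sets P"
    then have "A \<times> space D \<in> null_sets (Q \<Otimes>\<^sub>M D)"
      using ac by (auto simp: absolutely_continuous_def null_sets_def D.emeasure_pair_measure_Times)
    then show "A \<in> null_sets Q"
      using A sets_Q by (simp add: null_sets_def D.emeasure_pair_measure_Times D.emeasure_space_1)
  qed
  then show ?thesis using False unfolding ext_KL_divergence_def by auto
qed

lemma distr_pair_measure_assoc:
  assumes "prob_space A" "prob_space B" and C: "prob_space C"
  shows "distr ((A \<Otimes>\<^sub>M B) \<Otimes>\<^sub>M C) (A \<Otimes>\<^sub>M (B \<Otimes>\<^sub>M C)) (\<lambda>p. (fst (fst p), (snd (fst p), snd p)))
      = A \<Otimes>\<^sub>M (B \<Otimes>\<^sub>M C)" (is "distr ?ABC ?A_BC ?assoc = _")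
proof (rule pair_measure_eqI[symmetric])
  interpret A: prob_space A by fact
  interpret B: prob_space B by fact
  interpret C: prob_space C by fact
  interpret BC: prob_space "B \<Otimes>\<^sub>M C" by (rule prob_space_pair) fact+
  show "sigma_finite_measure A" "sigma_finite_measure (B \<Otimes>\<^sub>M C)"
    by unfold_locales
  show "sets ?A_BC = sets (distr ?ABC ?A_BC ?assoc)" by simp
  fix X E assume [measurable]: "X \<in> sets A" "E \<in> sets (B \<Otimes>\<^sub>M C)"
  have "emeasure (distr ?ABC ?A_BC ?assoc) (X \<times> E)
      = (\<integral>\<^sup>+q. \<integral>\<^sup>+z. indicator X (fst q) * indicator E (snd q, z) \<partial>C \<partial>(A \<Otimes>\<^sub>M B))"
    by (subst emeasure_distr, measurable, subst nn_integral_indicator[symmetric], measurable,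
        subst C.nn_integral_fst[symmetric], measurable)
       (auto intro!: nn_integral_cong simp: split_beta indicator_def space_pair_measure)
  also have "\<dots> = (\<integral>\<^sup>+x. \<integral>\<^sup>+y. \<integral>\<^sup>+z. indicator X x * indicator E (y, z) \<partial>C \<partial>B \<partial>A)"
    by (subst B.nn_integral_fst[symmetric]) (auto simp: split_beta)
  also have "\<dots> = (\<integral>\<^sup>+x. indicator X x * emeasure (B \<Otimes>\<^sub>M C) E \<partial>A)"
  proof (rule nn_integral_cong)
    fix x
    have "(\<integral>\<^sup>+y. \<integral>\<^sup>+z. indicator X x * indicator E (y, z) \<partial>C \<partial>B)
        = (\<integral>\<^sup>+y. indicator X x * (\<integral>\<^sup>+z. indicator E (y, z) \<partial>C) \<partial>B)"
      by (rule nn_integral_cong) (rule nn_integral_cmult, measurable)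
    also have "\<dots> = indicator X x * (\<integral>\<^sup>+y. \<integral>\<^sup>+z. indicator E (y, z) \<partial>C \<partial>B)"
      by (rule nn_integral_cmult) measurable
    finally show "(\<integral>\<^sup>+y. \<integral>\<^sup>+z. indicator X x * indicator E (y, z) \<partial>C \<partial>B) = indicator X x * emeasure (B \<Otimes>\<^sub>M C) E"
      by (simp add: C.nn_integral_fst nn_integral_indicator)
  qed
  also have "\<dots> = emeasure A X * emeasure (B \<Otimes>\<^sub>M C) E"
    by (simp add: nn_integral_multc)
  finally show "emeasure A X * emeasure (B \<Otimes>\<^sub>M C) E = emeasure (distr ?ABC ?A_BC ?assoc) (X \<times> E)" ..
qed

lemma MI_comp_right:
  assumes M: "prob_space M"
    and [measurable]: "X \<in> M \<rightarrow>\<^sub>M S" "W \<in> M \<rightarrow>\<^sub>M T" "g \<in> T \<rightarrow>\<^sub>M V" "h \<in> V \<rightarrow>\<^sub>M T"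
    and hg: "\<And>x. x \<in> space T \<Longrightarrow> h (g x) = x"
    and Z: "\<And>\<omega>. \<omega> \<in> space M \<Longrightarrow> Z \<omega> = g (W \<omega>)"
  shows "MI M S V X Z = MI M S T X W"
proof -
  interpret prob_space M by fact
  let ?dX = "distr M S X" and ?dW = "distr M T W" and ?XW = "distr M (S \<Otimes>\<^sub>M T) (\<lambda>\<omega>. (X \<omega>, W \<omega>))"
  let ?G = "\<lambda>(x, y). (x, g y)"
  have sets_dXdW: "sets (?dX \<Otimes>\<^sub>M ?dW) = sets (S \<Otimes>\<^sub>M T)"
    by (rule sets_pair_measure_cong) simp_all
  have "?dX \<Otimes>\<^sub>M distr M V Z = distr ?dX S (\<lambda>x. x) \<Otimes>\<^sub>M distr ?dW V g"
    using Z by (simp add: distr_id2 distr_distr comp_def cong: distr_cong)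
  also have "\<dots> = distr (?dX \<Otimes>\<^sub>M ?dW) (S \<Otimes>\<^sub>M V) ?G"
    by (subst pair_measure_distr)
       (simp_all add: prob_space_imp_sigma_finite prob_space.prob_space_distr prob_space_distr)
  finally have product: "?dX \<Otimes>\<^sub>M distr M V Z = distr (?dX \<Otimes>\<^sub>M ?dW) (S \<Otimes>\<^sub>M V) ?G" .
  have joint: "distr M (S \<Otimes>\<^sub>M V) (\<lambda>\<omega>. (X \<omega>, Z \<omega>)) = distr ?XW (S \<Otimes>\<^sub>M V) ?G"
    using Z by (simp add: distr_distr comp_def cong: distr_cong)
  have "MI M S V X Z = ext_KL_divergence (distr (?dX \<Otimes>\<^sub>M ?dW) (S \<Otimes>\<^sub>M V) ?G) (distr ?XW (S \<Otimes>\<^sub>M V) ?G)"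
    by (simp add: MI_eq_ext_KL_divergence[OF M] product joint)
  also have "\<dots> = ext_KL_divergence (?dX \<Otimes>\<^sub>M ?dW) ?XW"
  proof (rule ext_KL_divergence_distr)
    show "?G \<in> ?dX \<Otimes>\<^sub>M ?dW \<rightarrow>\<^sub>M S \<Otimes>\<^sub>M V" "(\<lambda>(x, y). (x, h y)) \<in> S \<Otimes>\<^sub>M V \<rightarrow>\<^sub>M ?dX \<Otimes>\<^sub>M ?dW"
      unfolding measurable_cong_sets[OF sets_dXdW refl] measurable_cong_sets[OF refl sets_dXdW]
      by measurable
  qed (auto simp: prob_space_pair prob_space_distr sets_dXdW space_pair_measure hg)
  also have "\<dots> = MI M S T X W" by (simp add: MI_eq_ext_KL_divergence[OF M])
  finally show ?thesis .
qed

lemma distr_pair_measure_eq_comp_left: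
  assumes M: "prob_space M" and [measurable]: "X \<in> M \<rightarrow>\<^sub>M S" "Y \<in> M \<rightarrow>\<^sub>M T" "f \<in> S \<rightarrow>\<^sub>M N"
    and indep: "distr M S X \<Otimes>\<^sub>M distr M T Y = distr M (S \<Otimes>\<^sub>M T) (\<lambda>\<omega>. (X \<omega>, Y \<omega>))"
  shows "distr M N (\<lambda>\<omega>. f (X \<omega>)) \<Otimes>\<^sub>M distr M T Y = distr M (N \<Otimes>\<^sub>M T) (\<lambda>\<omega>. (f (X \<omega>), Y \<omega>))"
proof -
  interpret prob_space M by fact
  have "distr M N (\<lambda>\<omega>. f (X \<omega>)) \<Otimes>\<^sub>M distr M T Y
      = distr (distr M S X) N f \<Otimes>\<^sub>M distr (distr M T Y) T (\<lambda>y. y)"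
    by (simp add: distr_distr comp_def distr_id2)
  also have "\<dots> = distr (distr M S X \<Otimes>\<^sub>M distr M T Y) (N \<Otimes>\<^sub>M T) (\<lambda>(x, y). (f x, y))"
    by (rule pair_measure_distr)
       (simp_all add: distr_id2 prob_space_imp_sigma_finite prob_space_distr)
  also have "\<dots> = distr M (N \<Otimes>\<^sub>M T) (\<lambda>\<omega>. (f (X \<omega>), Y \<omega>))"
    unfolding indep by (simp add: distr_distr comp_def)
  finally show ?thesis .
qed

lemma MI_pair_indep_right:
  assumes M: "prob_space M"
    and [measurable]: "X \<in> M \<rightarrow>\<^sub>M S" "W \<in> M \<rightarrow>\<^sub>M T" "Y \<in> M \<rightarrow>\<^sub>M U"
    and indep: "distr M (S \<Otimes>\<^sub>M T) (\<lambda>\<omega>. (X \<omega>, W \<omega>)) \<Otimes>\<^sub>M distr M U Y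
      = distr M ((S \<Otimes>\<^sub>M T) \<Otimes>\<^sub>M U) (\<lambda>\<omega>. ((X \<omega>, W \<omega>), Y \<omega>))"
  shows "MI M S (T \<Otimes>\<^sub>M U) X (\<lambda>\<omega>. (W \<omega>, Y \<omega>)) = MI M S T X W"
proof -
  interpret prob_space M by fact
  let ?dX = "distr M S X" and ?dW = "distr M T W" and ?dY = "distr M U Y"
    and ?XW = "distr M (S \<Otimes>\<^sub>M T) (\<lambda>\<omega>. (X \<omega>, W \<omega>))"
    and ?assoc = "\<lambda>p. (fst (fst p), (snd (fst p), snd p))" and ?N = "S \<Otimes>\<^sub>M (T \<Otimes>\<^sub>M U)"
  have WY: "distr M (T \<Otimes>\<^sub>M U) (\<lambda>\<omega>. (W \<omega>, Y \<omega>)) = ?dW \<Otimes>\<^sub>M ?dY"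
    using distr_pair_measure_eq_comp_left[OF M _ _ measurable_snd indep] by simp
  have joint: "distr M ?N (\<lambda>\<omega>. (X \<omega>, (W \<omega>, Y \<omega>))) = distr (?XW \<Otimes>\<^sub>M ?dY) ?N ?assoc"
    unfolding indep by (simp add: distr_distr comp_def)
  have sets_XW_Y: "sets (?XW \<Otimes>\<^sub>M ?dY) = sets ((S \<Otimes>\<^sub>M T) \<Otimes>\<^sub>M U)"
    and sets_X_W_Y: "sets ((?dX \<Otimes>\<^sub>M ?dW) \<Otimes>\<^sub>M ?dY) = sets ((S \<Otimes>\<^sub>M T) \<Otimes>\<^sub>M U)"
    and sets_X_W: "sets (?dX \<Otimes>\<^sub>M ?dW) = sets ?XW"
    by (auto intro!: sets_pair_measure_cong)
  have product: "?dX \<Otimes>\<^sub>M (?dW \<Otimes>\<^sub>M ?dY) = distr ((?dX \<Otimes>\<^sub>M ?dW) \<Otimes>\<^sub>M ?dY) ?N ?assoc"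
    by (subst distr_pair_measure_assoc[symmetric])
       (auto simp: prob_space_distr intro!: distr_cong sets_pair_measure_cong)
  have "MI M S (T \<Otimes>\<^sub>M U) X (\<lambda>\<omega>. (W \<omega>, Y \<omega>))
      = ext_KL_divergence (distr ((?dX \<Otimes>\<^sub>M ?dW) \<Otimes>\<^sub>M ?dY) ?N ?assoc) (distr (?XW \<Otimes>\<^sub>M ?dY) ?N ?assoc)"
    by (simp add: MI_eq_ext_KL_divergence[OF M] WY product joint)
  also have "\<dots> = ext_KL_divergence ((?dX \<Otimes>\<^sub>M ?dW) \<Otimes>\<^sub>M ?dY) (?XW \<Otimes>\<^sub>M ?dY)"
  proof (rule ext_KL_divergence_distr)
    show "?assoc \<in> (?dX \<Otimes>\<^sub>M ?dW) \<Otimes>\<^sub>M ?dY \<rightarrow>\<^sub>M ?N"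
      "(\<lambda>p. ((fst p, fst (snd p)), snd (snd p))) \<in> ?N \<rightarrow>\<^sub>M (?dX \<Otimes>\<^sub>M ?dW) \<Otimes>\<^sub>M ?dY"
      unfolding measurable_cong_sets[OF sets_X_W_Y refl] measurable_cong_sets[OF refl sets_X_W_Y]
      by measurable
  qed (simp_all add: prob_space_pair prob_space_distr sets_XW_Y sets_X_W_Y)
  also have "\<dots> = ext_KL_divergence (?dX \<Otimes>\<^sub>M ?dW) ?XW"
    by (rule ext_KL_divergence_pair_measure) (simp_all add: prob_space_pair prob_space_distr sets_X_W)
  also have "\<dots> = MI M S T X W" by (simp add: MI_eq_ext_KL_divergence[OF M])
  finally show ?thesis .
qed

lemma MI_eq_0_imp_indep_var:
  assumes M: "prob_space M" and "X \<in> M \<rightarrow>\<^sub>M S" "Y \<in> M \<rightarrow>\<^sub>M T" and "MI M S T X Y = 0"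
  shows "prob_space.indep_var M S X T Y"
proof -
  interpret information_space M "exp 1"
    using M by (simp add: information_space_def information_space_axioms_def)
  show ?thesis
    using assms by (subst mutual_information_indep_vars) (auto simp: MI_def Let_def split: if_splits)
qed

lemma indep_vars_Plus_of_pairs:
  fixes A B :: "'i \<Rightarrow> 'a \<Rightarrow> 'b"
  assumes M: "prob_space M" and I: "finite I" "I \<noteq> {}"
    and pairs: "prob_space.indep_vars M (\<lambda>_. S \<Otimes>\<^sub>M S) (\<lambda>j \<omega>. (A j \<omega>, B j \<omega>)) I"
    and each: "\<And>j. j \<in> I \<Longrightarrow> prob_space.indep_var M S (A j) S (B j)"
  shows "prob_space.indep_vars M (\<lambda>_. S) (case_sum A B) (I <+> I)"
proof -
  interpret prob_space M by fact
  have rv: "random_variable S (case_sum A B k)" if "k \<in> I <+> I" for k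
    using that by (auto intro: indep_var_rv1[OF each] indep_var_rv2[OF each])
  show ?thesis
  proof (subst indep_vars_finite[where E="\<lambda>_. sets S"])
    show "\<forall>E\<in>(\<Pi> i\<in>I <+> I. sets S). prob (\<Inter>j\<in>I <+> I. case_sum A B j -` E j \<inter> space M) =
        (\<Prod>j\<in>I <+> I. prob (case_sum A B j -` E j \<inter> space M))"
    proof
      fix E assume E: "E \<in> (\<Pi> i\<in>I <+> I. sets S)"
      have "(\<Inter>j\<in>I <+> I. case_sum A B j -` E j \<inter> space M) =
          (\<Inter>j\<in>I. (\<lambda>\<omega>. (A j \<omega>, B j \<omega>)) -` (E (Inl j) \<times> E (Inr j)) \<inter> space M)"
        using I(2) by (auto elim!: PlusE; metis InlI InrI sum.case)
      then have "prob (\<Inter>j\<in>I <+> I. case_sum A B j -` E j \<inter> space M) =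
          prob (\<Inter>j\<in>I. (\<lambda>\<omega>. (A j \<omega>, B j \<omega>)) -` (E (Inl j) \<times> E (Inr j)) \<inter> space M)"
        by simp
      also have "\<dots> = (\<Prod>j\<in>I. prob ((\<lambda>\<omega>. (A j \<omega>, B j \<omega>)) -` (E (Inl j) \<times> E (Inr j)) \<inter> space M))"
        by (rule indep_varsD_finite[OF pairs I(2,1)]) (use E in auto)
      also have "\<dots> = (\<Prod>j\<in>I. prob (A j -` E (Inl j) \<inter> space M) * prob (B j -` E (Inr j) \<inter> space M))"
        using E by (auto intro!: prod.cong indep_varD[OF each])
      also have "\<dots> = (\<Prod>j\<in>I <+> I. prob (case_sum A B j -` E j \<inter> space M))"
        using I(1) by (simp add: prod.Plus prod.distrib comp_def)
      finally show "prob (\<Inter>j\<in>I <+> I. case_sum A B j -` E j \<inter> space M) =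
        (\<Prod>j\<in>I <+> I. prob (case_sum A B j -` E j \<inter> space M))" .
    qed
  qed (use I rv sets.sets_into_space in \<open>auto simp: Int_stable_def sets.sigma_sets_eq\<close>)
qed

lemma indep_var_restrict_channel:
  fixes X R :: "'i \<Rightarrow> 'a \<Rightarrow> 'b" and \<phi> :: "'b \<Rightarrow> 'b \<Rightarrow> 'b"
  assumes M: "prob_space M" and I: "finite I" "I \<noteq> {}"
    and indep: "prob_space.indep_vars M (\<lambda>_. S) (case_sum X R) (I <+> I)"
    and \<phi>[measurable]: "case_prod \<phi> \<in> S \<Otimes>\<^sub>M S \<rightarrow>\<^sub>M S"
    and each: "\<And>j. j \<in> I \<Longrightarrow> prob_space.indep_var M S (X j) S (\<lambda>\<omega>. \<phi> (X j \<omega>) (R j \<omega>))"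
  shows "prob_space.indep_var M (PiM I (\<lambda>_. S)) (\<lambda>\<omega>. \<lambda>j\<in>I. X j \<omega>)
                                 (PiM I (\<lambda>_. S)) (\<lambda>\<omega>. \<lambda>j\<in>I. \<phi> (X j \<omega>) (R j \<omega>))"
proof -
  interpret prob_space M by fact
  let ?Y = "\<lambda>j \<omega>. \<phi> (X j \<omega>) (R j \<omega>)"
  have "indep_vars (\<lambda>j. PiM {Inl j, Inr j} (\<lambda>_. S)) (\<lambda>j \<omega>. restrict (\<lambda>k. case_sum X R k \<omega>) {Inl j, Inr j}) I"
    by (rule indep_vars_restrict[OF indep]) (auto simp: disjoint_family_on_def)
  then have "indep_vars (\<lambda>_. S \<Otimes>\<^sub>M S)
      (\<lambda>j \<omega>. (\<lambda>v. (v (Inl j), \<phi> (v (Inl j)) (v (Inr j)))) (restrict (\<lambda>k. case_sum X R k \<omega>) {Inl j, Inr j})) I"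
    by (rule indep_vars_compose2) measurable
  then have "indep_vars (\<lambda>_. S) (case_sum X ?Y) (I <+> I)"
    by (intro indep_vars_Plus_of_pairs[OF M I] each) simp_all
  then have "indep_var (PiM (Inl ` I) (\<lambda>_. S)) (\<lambda>\<omega>. restrict (\<lambda>k. case_sum X ?Y k \<omega>) (Inl ` I))
                  (PiM (Inr ` I) (\<lambda>_. S)) (\<lambda>\<omega>. restrict (\<lambda>k. case_sum X ?Y k \<omega>) (Inr ` I))"
    by (rule indep_var_restrict) auto
  then have "indep_var (PiM I (\<lambda>_. S)) ((\<lambda>v. \<lambda>j\<in>I. v (Inl j)) \<circ> (\<lambda>\<omega>. restrict (\<lambda>k. case_sum X ?Y k \<omega>) (Inl ` I)))
                  (PiM I (\<lambda>_. S)) ((\<lambda>v. \<lambda>j\<in>I. v (Inr j)) \<circ> (\<lambda>\<omega>. restrict (\<lambda>k. case_sum X ?Y k \<omega>) (Inr ` I)))"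
    by (rule indep_var_compose) (auto intro!: measurable_restrict measurable_component_singleton)
  then show ?thesis by (simp add: comp_def restrict_def cong: if_cong)
qed

lemma measurable_extend_PiM:
  fixes n :: nat
  shows "(\<lambda>p. \<lambda>j\<in>{..n}. if j < n then snd p j else fst p) \<in> S \<Otimes>\<^sub>M PiM {..<n} (\<lambda>_. S) \<rightarrow>\<^sub>M PiM {..n} (\<lambda>_. S)"
proof (rule measurable_restrict)
  fix j :: nat assume "j \<in> {..n}"
  show "(\<lambda>p. if j < n then snd p j else fst p) \<in> S \<Otimes>\<^sub>M PiM {..<n} (\<lambda>_. S) \<rightarrow>\<^sub>M S"
  proof (cases "j < n")
    case True
    then have [measurable]: "(\<lambda>y. y j) \<in> PiM {..<n} (\<lambda>_. S) \<rightarrow>\<^sub>M S"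
      by (intro measurable_component_singleton) simp
    show ?thesis using True by simp
  qed simp
qed

text \<open>Here \<open>\<phi>\<close> is the channel, \<open>\<sigma>\<close> sums the inputs, and \<open>\<delta> w y\<close> recovers the sum of the
  noises from the sum \<open>w\<close> of the inputs and the outputs \<open>y\<close>.\<close>

lemma MI_channel_outputs_and_noise:
  fixes X R :: "nat \<Rightarrow> 'a \<Rightarrow> 'b" and \<phi> :: "'b \<Rightarrow> 'b \<Rightarrow> 'b" and \<sigma> :: "(nat \<Rightarrow> 'b) \<Rightarrow> 'b"
    and \<delta> :: "'b \<Rightarrow> (nat \<Rightarrow> 'b) \<Rightarrow> 'b"
  assumes M: "prob_space M" and i: "i < n"
    and indep: "prob_space.indep_vars M (\<lambda>_. S) (case_sum X R) ({..<n} <+> {..<n})"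
    and MI_0: "\<And>j. j < n \<Longrightarrow> MI M S S (X j) (\<lambda>\<omega>. \<phi> (X j \<omega>) (R j \<omega>)) = 0"
    and [measurable]: "case_prod \<phi> \<in> S \<Otimes>\<^sub>M S \<rightarrow>\<^sub>M S" "\<sigma> \<in> PiM {..<n} (\<lambda>_. S) \<rightarrow>\<^sub>M S"
      "case_prod \<delta> \<in> S \<Otimes>\<^sub>M PiM {..<n} (\<lambda>_. S) \<rightarrow>\<^sub>M S"
    and \<delta>_\<delta>: "\<And>w y. w \<in> space S \<Longrightarrow> y \<in> space (PiM {..<n} (\<lambda>_. S)) \<Longrightarrow> \<delta> (\<delta> w y) y = w"
    and \<rho>: "\<And>\<omega>. \<omega> \<in> space M \<Longrightarrow>
       \<rho> \<omega> = \<delta> (\<sigma> (\<lambda>j\<in>{..<n}. X j \<omega>)) (\<lambda>j\<in>{..<n}. \<phi> (X j \<omega>) (R j \<omega>))"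
  shows "MI M S (PiM {..n} (\<lambda>_. S)) (X i)
           (\<lambda>\<omega>. \<lambda>j\<in>{..n}. if j < n then \<phi> (X j \<omega>) (R j \<omega>) else \<rho> \<omega>)
       = MI M S S (X i) (\<lambda>\<omega>. \<sigma> (\<lambda>j\<in>{..<n}. X j \<omega>))"
proof -
  interpret prob_space M by fact
  let ?Pi = "PiM {..<n} (\<lambda>_. S)"
  let ?Xv = "\<lambda>\<omega>. \<lambda>j\<in>{..<n}. X j \<omega>" and ?Yv = "\<lambda>\<omega>. \<lambda>j\<in>{..<n}. \<phi> (X j \<omega>) (R j \<omega>)"
  let ?W = "\<lambda>\<omega>. \<sigma> (?Xv \<omega>)"
  have [measurable]: "X j \<in> M \<rightarrow>\<^sub>M S" "R j \<in> M \<rightarrow>\<^sub>M S" if "j < n" for j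
    using indep that unfolding indep_vars_def by force+
  have [measurable]: "?Xv \<in> M \<rightarrow>\<^sub>M ?Pi" "?Yv \<in> M \<rightarrow>\<^sub>M ?Pi" "X i \<in> M \<rightarrow>\<^sub>M S"
    using i by (auto intro!: measurable_restrict)
  have "indep_var ?Pi ?Xv ?Pi ?Yv"
    using i by (intro indep_var_restrict_channel[OF M _ _ indep] MI_eq_0_imp_indep_var[OF M] MI_0)
      auto
  then have indep_XW_Y: "distr M (S \<Otimes>\<^sub>M S) (\<lambda>\<omega>. (X i \<omega>, ?W \<omega>)) \<Otimes>\<^sub>M distr M ?Pi ?Yv
      = distr M ((S \<Otimes>\<^sub>M S) \<Otimes>\<^sub>M ?Pi) (\<lambda>\<omega>. ((X i \<omega>, ?W \<omega>), ?Yv \<omega>))"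
    using distr_pair_measure_eq_comp_left[OF M _ _ _, of ?Xv ?Pi ?Yv ?Pi "\<lambda>v. (v i, \<sigma> v)" "S \<Otimes>\<^sub>M S"] i
    by (simp add: indep_var_distribution_eq)
  have "MI M S (PiM {..n} (\<lambda>_. S)) (X i) (\<lambda>\<omega>. \<lambda>j\<in>{..n}. if j < n then \<phi> (X j \<omega>) (R j \<omega>) else \<rho> \<omega>)
      = MI M S (S \<Otimes>\<^sub>M ?Pi) (X i) (\<lambda>\<omega>. (\<delta> (?W \<omega>) (?Yv \<omega>), ?Yv \<omega>))"
  proof (rule MI_comp_right[OF M _ _ measurable_extend_PiM])
    show "(\<lambda>\<omega>. (\<delta> (?W \<omega>) (?Yv \<omega>), ?Yv \<omega>)) \<in> M \<rightarrow>\<^sub>M S \<Otimes>\<^sub>M ?Pi" by measurable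
    show "(\<lambda>z. (z n, restrict z {..<n})) \<in> PiM {..n} (\<lambda>_. S) \<rightarrow>\<^sub>M S \<Otimes>\<^sub>M ?Pi"
      by (auto intro!: measurable_Pair measurable_restrict_subset measurable_component_singleton)
  qed (auto simp: space_pair_measure space_PiM PiE_def extensional_def restrict_def fun_eq_iff \<rho>)
  also have "\<dots> = MI M S (S \<Otimes>\<^sub>M ?Pi) (X i) (\<lambda>\<omega>. (?W \<omega>, ?Yv \<omega>))"
    by (rule MI_comp_right[OF M, where g="\<lambda>(w, y). (\<delta> w y, y)" and h="\<lambda>(w, y). (\<delta> w y, y)"])
       (auto simp: space_pair_measure \<delta>_\<delta>)
  also have "\<dots> = MI M S S (X i) ?W"
    by (rule MI_pair_indep_right[OF M _ _ _ indep_XW_Y]) measurable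
  finally show ?thesis .
qed

lemma MI_noisy_sum_real:
  fixes X R :: "nat \<Rightarrow> 'a \<Rightarrow> real"
  assumes M: "prob_space M" and i: "i < n"
    and indep: "prob_space.indep_vars M (\<lambda>_. borel) (case_sum X R) ({..<n} <+> {..<n})"
    and MI_0: "\<And>j. j < n \<Longrightarrow> MI M borel borel (X j) (\<lambda>\<omega>. X j \<omega> + R j \<omega>) = 0"
  shows "MI M borel (PiM {..n} (\<lambda>_. borel)) (X i)
           (\<lambda>\<omega>. \<lambda>j\<in>{..n}. if j < n then X j \<omega> + R j \<omega> else (\<Sum>k<n. R k \<omega>))
       = MI M borel borel (X i) (\<lambda>\<omega>. \<Sum>j<n. X j \<omega>)"
proof -
  have "MI M borel (PiM {..n} (\<lambda>_. borel)) (X i)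
           (\<lambda>\<omega>. \<lambda>j\<in>{..n}. if j < n then X j \<omega> + R j \<omega> else (\<Sum>k<n. R k \<omega>))
       = MI M borel borel (X i) (\<lambda>\<omega>. \<Sum>j<n. (\<lambda>j\<in>{..<n}. X j \<omega>) j)"
    by (rule MI_channel_outputs_and_noise[OF M i indep, where \<phi>="(+)"
          and \<sigma>="\<lambda>v. \<Sum>j<n. v j" and \<delta>="\<lambda>w y. (\<Sum>k<n. y k) - w"])
       (auto simp: MI_0 sum.distrib)
  then show ?thesis by simp
qed

lemma mod_add_diff_eq_iff:
  fixes a b c p :: nat
  assumes "b \<le> p"
  shows "(a + p - b) mod p = c mod p \<longleftrightarrow> a mod p = (b + c) mod p"
proof -
  have "(a + p - b) mod p = c mod p \<longleftrightarrow> int p dvd int (a + p - b) - int c"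
    by (metis mod_eq_dvd_iff of_nat_eq_iff of_nat_mod)
  also have "int (a + p - b) - int c = (int a - (int b + int c)) + int p" using assms by simp
  also have "int p dvd \<dots> \<longleftrightarrow> a mod p = (b + c) mod p"
    by (metis dvd_add_triv_right_iff mod_eq_dvd_iff of_nat_add of_nat_eq_iff of_nat_mod)
  finally show ?thesis .
qed

lemma mod_add_diff_mod_cancel:
  fixes s w p :: nat
  assumes "w < p"
  shows "(s + p - (s + p - w) mod p) mod p = w"
proof -
  have "s mod p = (w + (s + p - w) mod p) mod p"
    using mod_add_diff_eq_iff[of w p s "s + p - w"] assms by (simp add: mod_add_right_eq)
  then have "(s + p - (s + p - w) mod p) mod p = w mod p"
    using assms by (subst mod_add_diff_eq_iff) (simp_all add: add.commute less_imp_le)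
  then show ?thesis using assms by simp
qed

lemma MI_noisy_sum_mod:
  fixes X R :: "nat \<Rightarrow> 'a \<Rightarrow> nat" and p :: nat
  assumes M: "prob_space M" and i: "i < n" and p: "0 < p"
    and indep: "prob_space.indep_vars M (\<lambda>_. count_space {0..<p}) (case_sum X R) ({..<n} <+> {..<n})"
    and MI_0: "\<And>j. j < n \<Longrightarrow>
      MI M (count_space {0..<p}) (count_space {0..<p}) (X j) (\<lambda>\<omega>. (X j \<omega> + R j \<omega>) mod p) = 0"
  shows "MI M (count_space {0..<p}) (PiM {..n} (\<lambda>_. count_space {0..<p})) (X i)
           (\<lambda>\<omega>. \<lambda>j\<in>{..n}. if j < n then (X j \<omega> + R j \<omega>) mod p else (\<Sum>k<n. R k \<omega>) mod p)
       = MI M (count_space {0..<p}) (count_space {0..<p}) (X i) (\<lambda>\<omega>. (\<Sum>j<n. X j \<omega>) mod p)"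
proof -
  let ?S = "count_space {0..<p}" and ?V = "PiE {..<n} (\<lambda>_. {0..<p})"
  have Pi_count_space: "PiM {..<n} (\<lambda>_. ?S) = count_space ?V"
    by (rule count_space_PiM_finite) simp_all
  have countable_V: "countable ?V" by (simp add: countable_finite finite_PiE)
  have "MI M ?S (PiM {..n} (\<lambda>_. ?S)) (X i)
           (\<lambda>\<omega>. \<lambda>j\<in>{..n}. if j < n then (X j \<omega> + R j \<omega>) mod p else (\<Sum>k<n. R k \<omega>) mod p)
       = MI M ?S ?S (X i) (\<lambda>\<omega>. (\<Sum>j<n. (\<lambda>j\<in>{..<n}. X j \<omega>) j) mod p)"
  \<comment> \<open>Adding \<open>p\<close> before subtracting keeps the subtraction on \<open>nat\<close> from truncating.\<close>
  proof (rule MI_channel_outputs_and_noise[OF M i indep, where \<phi>="\<lambda>a b. (a + b) mod p"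
        and \<sigma>="\<lambda>v. (\<Sum>j<n. v j) mod p" and \<delta>="\<lambda>w y. ((\<Sum>k<n. y k) + p - w) mod p"])
    fix w and y :: "nat \<Rightarrow> nat" assume "w \<in> space ?S"
    then show "((\<Sum>k<n. y k) + p - ((\<Sum>k<n. y k) + p - w) mod p) mod p = w"
      by (simp add: mod_add_diff_mod_cancel)
  next
    fix \<omega>
    let ?A = "\<Sum>k<n. (X k \<omega> + R k \<omega>) mod p" and ?B = "(\<Sum>k<n. X k \<omega>) mod p"
    have "?A mod p = (?B + (\<Sum>k<n. R k \<omega>)) mod p"
      by (simp add: mod_sum_eq sum.distrib mod_add_left_eq)
    then have "(?A + p - ?B) mod p = (\<Sum>k<n. R k \<omega>) mod p"
      using p by (subst mod_add_diff_eq_iff) (simp_all add: less_imp_le)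
    moreover have "(\<Sum>k<n. (\<lambda>j\<in>{..<n}. (X j \<omega> + R j \<omega>) mod p) k) = ?A"
      and "(\<Sum>j<n. (\<lambda>j\<in>{..<n}. X j \<omega>) j) = (\<Sum>k<n. X k \<omega>)"
      by (auto intro: sum.cong)
    ultimately show "(\<Sum>k<n. R k \<omega>) mod p
      = ((\<Sum>k<n. (\<lambda>j\<in>{..<n}. (X j \<omega> + R j \<omega>) mod p) k) + p - (\<Sum>j<n. (\<lambda>j\<in>{..<n}. X j \<omega>) j) mod p) mod p"
      by (simp only:)
  next
    show "case_prod (\<lambda>a b. (a + b) mod p) \<in> ?S \<Otimes>\<^sub>M ?S \<rightarrow>\<^sub>M ?S"
      by (auto simp: pair_measure_countable p)
    show "(\<lambda>v. (\<Sum>j<n. v j) mod p) \<in> PiM {..<n} (\<lambda>_. ?S) \<rightarrow>\<^sub>M ?S"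
      by (simp add: Pi_count_space p)
    show "case_prod (\<lambda>w y. ((\<Sum>k<n. y k) + p - w) mod p) \<in> ?S \<Otimes>\<^sub>M PiM {..<n} (\<lambda>_. ?S) \<rightarrow>\<^sub>M ?S"
      by (simp add: Pi_count_space pair_measure_countable countable_V) (simp add: Pi_iff split_beta' p)
  qed (rule MI_0)
  then show ?thesis by simp
qed

theorem mainTheorem4:
  fixes M :: "'a measure" and n :: nat
  assumes "prob_space M"
  shows
    "(\<forall>(X :: nat \<Rightarrow> 'a \<Rightarrow> real) (R :: nat \<Rightarrow> 'a \<Rightarrow> real).
        prob_space.indep_vars M (\<lambda>_. borel) (case_sum X R) ({..<n} <+> {..<n}) \<and>
        (\<forall>i<n. MI M borel borel (X i) (\<lambda>\<omega>. X i \<omega> + R i \<omega>) = 0)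
        \<longrightarrow> (\<forall>i<n.
              MI M borel (PiM {..n} (\<lambda>_. borel)) (X i)
                 (\<lambda>\<omega>. \<lambda>j\<in>{..n}. if j < n then X j \<omega> + R j \<omega> else (\<Sum>k<n. R k \<omega>))
            = MI M borel borel (X i) (\<lambda>\<omega>. \<Sum>j<n. X j \<omega>)))
   \<and>
    (\<forall>(p :: nat) (X :: nat \<Rightarrow> 'a \<Rightarrow> nat) (R :: nat \<Rightarrow> 'a \<Rightarrow> nat).
        0 < p \<and>
        prob_space.indep_vars M (\<lambda>_. count_space {0..<p}) (case_sum X R) ({..<n} <+> {..<n}) \<and>
        (\<forall>i<n. MI M (count_space {0..<p}) (count_space {0..<p}) (X i)
                  (\<lambda>\<omega>. (X i \<omega> + R i \<omega>) mod p) = 0)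
        \<longrightarrow> (\<forall>i<n.
              MI M (count_space {0..<p}) (PiM {..n} (\<lambda>_. count_space {0..<p})) (X i)
                 (\<lambda>\<omega>. \<lambda>j\<in>{..n}. if j < n then (X j \<omega> + R j \<omega>) mod p else (\<Sum>k<n. R k \<omega>) mod p)
            = MI M (count_space {0..<p}) (count_space {0..<p}) (X i) (\<lambda>\<omega>. (\<Sum>j<n. X j \<omega>) mod p)))"
  using MI_noisy_sum_real[OF assms] MI_noisy_sum_mod[OF assms] by blast

end
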